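(* Let $\mathcal G$ be a second countable ample groupoid whose unit space $\mathcal G^{(0)}$ is Hausdorff, let $\ell$ be a field, and let $\nu:\mathcal G^{(2)}\to\mathcal U(\ell)$ be a normalized continuous $2$-cocycle. Assume that $\mathcal G$ is effective, that for every nonzero $f\in\mathcal A(\mathcal G,\nu)$ the support $\operatorname{supp}(f)=\{\xi:f(\xi)\neq0\}$ has nonempty interior, and that $\mathcal G$ is minimal. Then $\mathcal A(\mathcal G,\nu)$ is simple.
   Context: An ample groupoid is an étale topological groupoid (possibly non-Hausdorff) whose topology has a basis of compact open slices, where a slice is an open set on which the domain map $d$ and the range map are injective. $\mathcal G$ is effective if the interior of its isotropy is $\mathcal G^{(0)}$, and minimal if every orbit in $\mathcal G^{(0)}$ is dense. A continuous $2$-cocycle is a locally constant map $\nu:\mathcal G^{(2)}\to\mathcal U(\ell)$ (with $\mathcal U(\ell)$ discrete) satisfying $\nu(\xi_1,\xi_2)\nu(\xi_1\xi_2,\xi_3)=\nu(\xi_1,\xi_2\xi_3)\nu(\xi_2,\xi_3)$; it is normalized if $\nu(\xi,d(\xi))=\nu(d(\xi^{-1}),\xi)=1$ for all $\xi$. The twisted Steinberg algebra $\mathcal A(\mathcal G,\nu)$ is the $\ell$-module spanned by the functions $\mathcal G\to\ell$ which are continuous (for discrete $\ell$) and compactly supported on some Hausdorff open subset and zero outside it (equivalently, the span of characteristic functions of compact open slices), with product $(f\star_\nu g)(\xi)=\sum_{\xi=\xi_1\xi_2}\nu(\xi_1,\xi_2)f(\xi_1)g(\xi_2)$. *)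

theory Defs
  imports "HOL-Analysis.Analysis"
begin

text \<open>A groupoid is given by a topology T whose carrier topspace T is the set of arrows,
  domain (source) map d, range map r, a (total, but only meaningful on composable pairs)
  composition mul and inversion iv.\<close>

definition composable :: "'g set \<Rightarrow> ('g \<Rightarrow> 'g) \<Rightarrow> ('g \<Rightarrow> 'g) \<Rightarrow> ('g \<times> 'g) set" where
  "composable G d r = {(a, b). a \<in> G \<and> b \<in> G \<and> d a = r b}"

definition unit_space :: "'g set \<Rightarrow> ('g \<Rightarrow> 'g) \<Rightarrow> 'g set" where
  "unit_space G d = d ` G"

definition groupoid ::
  "'g set \<Rightarrow> ('g \<Rightarrow> 'g) \<Rightarrow> ('g \<Rightarrow> 'g) \<Rightarrow> ('g \<Rightarrow> 'g \<Rightarrow> 'g) \<Rightarrow> ('g \<Rightarrow> 'g) \<Rightarrow> bool" where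
  "groupoid G d r mul iv \<longleftrightarrow>
     (\<forall>a\<in>G. d a \<in> G \<and> r a \<in> G \<and> d (d a) = d a \<and> r (d a) = d a
              \<and> d (r a) = r a \<and> r (r a) = r a) \<and>
     (\<forall>a\<in>G. \<forall>b\<in>G. d a = r b \<longrightarrow>
              mul a b \<in> G \<and> d (mul a b) = d b \<and> r (mul a b) = r a) \<and>
     (\<forall>a\<in>G. \<forall>b\<in>G. \<forall>c\<in>G. d a = r b \<longrightarrow> d b = r c \<longrightarrow>
              mul (mul a b) c = mul a (mul b c)) \<and>
     (\<forall>a\<in>G. mul (r a) a = a \<and> mul a (d a) = a) \<and>
     (\<forall>a\<in>G. iv a \<in> G \<and> d (iv a) = r a \<and> r (iv a) = d a
              \<and> mul (iv a) a = d a \<and> mul a (iv a) = r a)"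

definition topological_groupoid ::
  "'g topology \<Rightarrow> ('g \<Rightarrow> 'g) \<Rightarrow> ('g \<Rightarrow> 'g) \<Rightarrow> ('g \<Rightarrow> 'g \<Rightarrow> 'g) \<Rightarrow> ('g \<Rightarrow> 'g) \<Rightarrow> bool" where
  "topological_groupoid T d r mul iv \<longleftrightarrow>
     groupoid (topspace T) d r mul iv \<and>
     continuous_map
       (subtopology (prod_topology T T) (composable (topspace T) d r)) T (\<lambda>(a, b). mul a b) \<and>
     continuous_map T T iv"

definition etale_groupoid ::
  "'g topology \<Rightarrow> ('g \<Rightarrow> 'g) \<Rightarrow> ('g \<Rightarrow> 'g) \<Rightarrow> ('g \<Rightarrow> 'g \<Rightarrow> 'g) \<Rightarrow> ('g \<Rightarrow> 'g) \<Rightarrow> bool" where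
  "etale_groupoid T d r mul iv \<longleftrightarrow>
     topological_groupoid T d r mul iv \<and>
     (\<forall>x\<in>topspace T. \<exists>U. openin T U \<and> x \<in> U \<and> openin T (d ` U) \<and>
        homeomorphic_map (subtopology T U) (subtopology T (d ` U)) d)"

definition slice :: "'g topology \<Rightarrow> ('g \<Rightarrow> 'g) \<Rightarrow> ('g \<Rightarrow> 'g) \<Rightarrow> 'g set \<Rightarrow> bool" where
  "slice T d r U \<longleftrightarrow> openin T U \<and> inj_on d U \<and> inj_on r U"

definition compact_open_slice :: "'g topology \<Rightarrow> ('g \<Rightarrow> 'g) \<Rightarrow> ('g \<Rightarrow> 'g) \<Rightarrow> 'g set \<Rightarrow> bool" where
  "compact_open_slice T d r U \<longleftrightarrow> slice T d r U \<and> compactin T U"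

definition ample_groupoid ::
  "'g topology \<Rightarrow> ('g \<Rightarrow> 'g) \<Rightarrow> ('g \<Rightarrow> 'g) \<Rightarrow> ('g \<Rightarrow> 'g \<Rightarrow> 'g) \<Rightarrow> ('g \<Rightarrow> 'g) \<Rightarrow> bool" where
  "ample_groupoid T d r mul iv \<longleftrightarrow>
     etale_groupoid T d r mul iv \<and>
     (\<forall>W x. openin T W \<and> x \<in> W \<longrightarrow>
        (\<exists>U. compact_open_slice T d r U \<and> x \<in> U \<and> U \<subseteq> W))"

definition isotropy :: "'g set \<Rightarrow> ('g \<Rightarrow> 'g) \<Rightarrow> ('g \<Rightarrow> 'g) \<Rightarrow> 'g set" where
  "isotropy G d r = {a \<in> G. d a = r a}"

definition effective :: "'g topology \<Rightarrow> ('g \<Rightarrow> 'g) \<Rightarrow> ('g \<Rightarrow> 'g) \<Rightarrow> bool" where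
  "effective T d r \<longleftrightarrow> T interior_of (isotropy (topspace T) d r) = unit_space (topspace T) d"

definition orbit :: "'g set \<Rightarrow> ('g \<Rightarrow> 'g) \<Rightarrow> ('g \<Rightarrow> 'g) \<Rightarrow> 'g \<Rightarrow> 'g set" where
  "orbit G d r u = {r a | a. a \<in> G \<and> d a = u}"

definition minimal :: "'g topology \<Rightarrow> ('g \<Rightarrow> 'g) \<Rightarrow> ('g \<Rightarrow> 'g) \<Rightarrow> bool" where
  "minimal T d r \<longleftrightarrow>
     (\<forall>u \<in> unit_space (topspace T) d.
        (subtopology T (unit_space (topspace T) d)) closure_of (orbit (topspace T) d r u)
          = unit_space (topspace T) d)"

text \<open>Continuous (= locally constant, values in the discrete group of unit_space of the field)
  normalized 2-cocycle.\<close>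
definition normalized_continuous_2cocycle ::
  "'g topology \<Rightarrow> ('g \<Rightarrow> 'g) \<Rightarrow> ('g \<Rightarrow> 'g) \<Rightarrow> ('g \<Rightarrow> 'g \<Rightarrow> 'g) \<Rightarrow> ('g \<Rightarrow> 'g)
    \<Rightarrow> ('g \<Rightarrow> 'g \<Rightarrow> 'k::field) \<Rightarrow> bool" where
  "normalized_continuous_2cocycle T d r mul iv \<nu> \<longleftrightarrow>
     (let G = topspace T; G2 = composable G d r in
       (\<forall>(a, b) \<in> G2. \<nu> a b \<noteq> 0) \<and>
       (\<forall>p \<in> G2. \<exists>W. openin (subtopology (prod_topology T T) G2) W \<and> p \<in> W \<and>
           (\<forall>q \<in> W. \<nu> (fst q) (snd q) = \<nu> (fst p) (snd p))) \<and>
       (\<forall>a\<in>G. \<forall>b\<in>G. \<forall>c\<in>G. d a = r b \<longrightarrow> d b = r c \<longrightarrow>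
           \<nu> a b * \<nu> (mul a b) c = \<nu> a (mul b c) * \<nu> b c) \<and>
       (\<forall>a\<in>G. \<nu> a (d a) = 1 \<and> \<nu> (d (iv a)) a = 1))"

text \<open>The twisted Steinberg algebra (as a set of functions G \<rightarrow> k, zero off G):
  the k-span of characteristic functions of compact open slices.\<close>
definition steinberg_algebra :: "'g topology \<Rightarrow> ('g \<Rightarrow> 'g) \<Rightarrow> ('g \<Rightarrow> 'g) \<Rightarrow> ('g \<Rightarrow> 'k::field) set" where
  "steinberg_algebra T d r =
     {f. \<exists>F c. finite F \<and> (\<forall>U\<in>F. compact_open_slice T d r U) \<and>
             f = (\<lambda>x. \<Sum>U\<in>F. c U * indicator U x)}"

definition twisted_conv ::
  "'g set \<Rightarrow> ('g \<Rightarrow> 'g) \<Rightarrow> ('g \<Rightarrow> 'g) \<Rightarrow> ('g \<Rightarrow> 'g \<Rightarrow> 'g) \<Rightarrow> ('g \<Rightarrow> 'g \<Rightarrow> 'k::field)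
     \<Rightarrow> ('g \<Rightarrow> 'k) \<Rightarrow> ('g \<Rightarrow> 'k) \<Rightarrow> ('g \<Rightarrow> 'k)" where
  "twisted_conv G d r mul \<nu> f g = (\<lambda>x.
     \<Sum>(a, b) \<in> {(a, b). a \<in> G \<and> b \<in> G \<and> d a = r b \<and> mul a b = x \<and> f a \<noteq> 0 \<and> g b \<noteq> 0}.
        \<nu> a b * f a * g b)"

definition two_sided_ideal ::
  "('g \<Rightarrow> 'k::field) set \<Rightarrow> (('g \<Rightarrow> 'k) \<Rightarrow> ('g \<Rightarrow> 'k) \<Rightarrow> ('g \<Rightarrow> 'k)) \<Rightarrow> ('g \<Rightarrow> 'k) set \<Rightarrow> bool" where
  "two_sided_ideal A prd I \<longleftrightarrow>
     I \<subseteq> A \<and> (\<lambda>_. 0) \<in> I \<and>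
     (\<forall>f\<in>I. \<forall>g\<in>I. (\<lambda>x. f x + g x) \<in> I) \<and>
     (\<forall>f\<in>I. (\<lambda>x. - f x) \<in> I) \<and>
     (\<forall>f\<in>I. \<forall>a\<in>A. prd a f \<in> I \<and> prd f a \<in> I)"

definition simple_algebra ::
  "('g \<Rightarrow> 'k::field) set \<Rightarrow> (('g \<Rightarrow> 'k) \<Rightarrow> ('g \<Rightarrow> 'k) \<Rightarrow> ('g \<Rightarrow> 'k)) \<Rightarrow> bool" where
  "simple_algebra A prd \<longleftrightarrow>
     (\<forall>I. two_sided_ideal A prd I \<longrightarrow> I = {\<lambda>_. 0} \<or> I = A)"

end

theory Submission
  imports Defs
begin

text \<open>
  Let I be a nonzero ideal and f \<in> I nonzero. Convolving f on the left with the indicator of the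
  inverse of a compact open slice B inside the interior of the support of f moves f onto the unit
  space: the result h \<in> I does not vanish on the open set d(B) of units. As h is a finite
  combination of indicators of compact open slices, effectiveness and the Hausdorff property of
  the unit space give a nonempty compact open set V of units on which the corner 1_V * h * 1_V
  is a nonzero multiple of 1_V, so 1_V \<in> I. By minimality every unit u is the source of an
  arrow with range in V; conjugating 1_V by the indicator of a small slice S around that arrow
  gives 1_d(S) \<in> I, hence by compactness 1_K \<in> I for every compact open set K of units.
  Finally c 1_U = c 1_U * 1_d(U) for every compact open slice U, so I is the whole algebra.
\<close>

lemma two_sided_ideal_subset: "two_sided_ideal A prd I \<Longrightarrow> I \<subseteq> A"
  and two_sided_ideal_zero: "two_sided_ideal A prd I \<Longrightarrow> (\<lambda>_. 0) \<in> I"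
  and two_sided_ideal_add: "two_sided_ideal A prd I \<Longrightarrow> f \<in> I \<Longrightarrow> g \<in> I \<Longrightarrow> (\<lambda>x. f x + g x) \<in> I"
  and two_sided_ideal_uminus: "two_sided_ideal A prd I \<Longrightarrow> f \<in> I \<Longrightarrow> (\<lambda>x. - f x) \<in> I"
  and two_sided_ideal_mult_left: "two_sided_ideal A prd I \<Longrightarrow> a \<in> A \<Longrightarrow> f \<in> I \<Longrightarrow> prd a f \<in> I"
  and two_sided_ideal_mult_right: "two_sided_ideal A prd I \<Longrightarrow> f \<in> I \<Longrightarrow> a \<in> A \<Longrightarrow> prd f a \<in> I"
  unfolding two_sided_ideal_def by blast+

lemma two_sided_ideal_sum:
  assumes "two_sided_ideal A prd I" "finite F" "\<And>U. U \<in> F \<Longrightarrow> g U \<in> I"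
  shows "(\<lambda>x. \<Sum>U\<in>F. g U x) \<in> I"
  using assms(2,3)
proof (induction F rule: finite_induct)
  case empty
  then show ?case using two_sided_ideal_zero[OF assms(1)] by simp
next
  case (insert U F)
  then show ?case using two_sided_ideal_add[OF assms(1), of "g U"] by simp
qed

lemma finite_shrinking:
  assumes "finite F" "Q W"
    and step: "\<And>U W. U \<in> F \<Longrightarrow> Q W \<Longrightarrow> \<exists>W'\<subseteq>W. Q W' \<and> P U W'"
    and mono: "\<And>U W W'. P U W \<Longrightarrow> W' \<subseteq> W \<Longrightarrow> P U W'"
  shows "\<exists>W'\<subseteq>W. Q W' \<and> (\<forall>U\<in>F. P U W')"
  using assms(1,2) step
proof (induction F arbitrary: W rule: finite_induct)
  case empty
  then show ?case by blast
next
  case (insert U F)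
  obtain W1 where W1: "W1 \<subseteq> W" "Q W1" "\<forall>V\<in>F. P V W1"
    using insert.IH[OF insert.prems(1)] insert.prems(2) by blast
  obtain W2 where W2: "W2 \<subseteq> W1" "Q W2" "P U W2"
    using insert.prems(2)[of U W1] W1(2) by blast
  have "\<forall>V\<in>insert U F. P V W2"
    using W1(3) W2(1,3) mono by blast
  then show ?case
    using W1(1) W2(1,2) by blast
qed

lemma Hausdorff_subtopology_separation:
  assumes "Hausdorff_space (subtopology X S)"
    and "u \<in> topspace X" "u \<in> S" "v \<in> topspace X" "v \<in> S" "u \<noteq> v"
  obtains P Q where "openin X P" "openin X Q" "u \<in> P" "v \<in> Q" "P \<inter> Q \<inter> S = {}"
proof -
  have "u \<in> topspace (subtopology X S)" "v \<in> topspace (subtopology X S)" "u \<noteq> v"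
    using assms(2-6) by simp_all
  then obtain P' Q' where P'Q': "openin (subtopology X S) P'" "openin (subtopology X S) Q'"
      "u \<in> P'" "v \<in> Q'" "disjnt P' Q'"
    using assms(1)[unfolded Hausdorff_space_def, rule_format, of u v] by blast
  obtain P where P: "openin X P" "P' = P \<inter> S"
    using P'Q'(1) unfolding openin_subtopology by blast
  obtain Q where Q: "openin X Q" "Q' = Q \<inter> S"
    using P'Q'(2) unfolding openin_subtopology by blast
  have "u \<in> P" "v \<in> Q" "P \<inter> Q \<inter> S = {}"
    using P'Q'(3-5) P(2) Q(2) unfolding disjnt_def by auto
  then show thesis
    using that P(1) Q(1) by blast
qed

locale ample =
  fixes T :: "'g topology" and d r :: "'g \<Rightarrow> 'g" and mul :: "'g \<Rightarrow> 'g \<Rightarrow> 'g" and iv :: "'g \<Rightarrow> 'g"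
  assumes ample_groupoid: "ample_groupoid T d r mul iv"
begin

abbreviation G where "G \<equiv> topspace T"
abbreviation G0 where "G0 \<equiv> unit_space G d"

lemma groupoid: "groupoid G d r mul iv"
  using ample_groupoid unfolding ample_groupoid_def etale_groupoid_def topological_groupoid_def
  by blast

lemma d_in_G [simp]: "a \<in> G \<Longrightarrow> d a \<in> G"
  and r_in_G [simp]: "a \<in> G \<Longrightarrow> r a \<in> G"
  and d_d [simp]: "a \<in> G \<Longrightarrow> d (d a) = d a"
  and r_d [simp]: "a \<in> G \<Longrightarrow> r (d a) = d a"
  and d_r [simp]: "a \<in> G \<Longrightarrow> d (r a) = r a"
  and r_r [simp]: "a \<in> G \<Longrightarrow> r (r a) = r a"
  and mul_in_G [simp]: "\<lbrakk>a \<in> G; b \<in> G; d a = r b\<rbrakk> \<Longrightarrow> mul a b \<in> G"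
  and d_mul [simp]: "\<lbrakk>a \<in> G; b \<in> G; d a = r b\<rbrakk> \<Longrightarrow> d (mul a b) = d b"
  and r_mul [simp]: "\<lbrakk>a \<in> G; b \<in> G; d a = r b\<rbrakk> \<Longrightarrow> r (mul a b) = r a"
  and mul_assoc: "\<lbrakk>a \<in> G; b \<in> G; c \<in> G; d a = r b; d b = r c\<rbrakk> \<Longrightarrow> mul (mul a b) c = mul a (mul b c)"
  and mul_r_left [simp]: "a \<in> G \<Longrightarrow> mul (r a) a = a"
  and mul_d_right [simp]: "a \<in> G \<Longrightarrow> mul a (d a) = a"
  and iv_in_G [simp]: "a \<in> G \<Longrightarrow> iv a \<in> G"
  and d_iv [simp]: "a \<in> G \<Longrightarrow> d (iv a) = r a"
  and r_iv [simp]: "a \<in> G \<Longrightarrow> r (iv a) = d a"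
  and mul_iv_left [simp]: "a \<in> G \<Longrightarrow> mul (iv a) a = d a"
  and mul_iv_right [simp]: "a \<in> G \<Longrightarrow> mul a (iv a) = r a"
  using groupoid unfolding groupoid_def by blast+

lemma unit_space_iff: "u \<in> G0 \<longleftrightarrow> u \<in> G \<and> d u = u"
  unfolding unit_space_def by (auto intro: rev_image_eqI)

lemma d_in_unit_space [simp]: "a \<in> G \<Longrightarrow> d a \<in> G0"
  and r_in_unit_space [simp]: "a \<in> G \<Longrightarrow> r a \<in> G0"
  by (simp_all add: unit_space_iff)

lemma unit_space_fixed: "u \<in> G0 \<Longrightarrow> u \<in> G \<and> d u = u \<and> r u = u"
  by (metis unit_space_iff r_d)

lemma iv_iv [simp]:
  assumes "a \<in> G" shows "iv (iv a) = a"
proof -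
  have "iv (iv a) = mul (mul a (iv a)) (iv (iv a))"
    using assms mul_r_left[of "iv (iv a)"] by simp
  also have "\<dots> = mul a (mul (iv a) (iv (iv a)))"
    using assms by (intro mul_assoc) simp_all
  also have "\<dots> = a"
    using assms by simp
  finally show ?thesis .
qed

lemma mul_iv_cancel_left:
  assumes "a \<in> G" "b \<in> G" "d a = r b" shows "mul (iv a) (mul a b) = b"
proof -
  have "mul (iv a) (mul a b) = mul (mul (iv a) a) b"
    using assms by (intro mul_assoc[symmetric]) simp_all
  then show ?thesis
    using assms by simp
qed

lemma continuous_map_iv: "continuous_map T T iv"
  using ample_groupoid unfolding ample_groupoid_def etale_groupoid_def topological_groupoid_def
  by blast

lemma d_local_homeomorphism:
  "x \<in> G \<Longrightarrow> \<exists>U. openin T U \<and> x \<in> U \<and> openin T (d ` U) \<and>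
     homeomorphic_map (subtopology T U) (subtopology T (d ` U)) d"
  using ample_groupoid unfolding ample_groupoid_def etale_groupoid_def by blast

lemma compact_open_slice_basis:
  "openin T W \<Longrightarrow> x \<in> W \<Longrightarrow> \<exists>U. compact_open_slice T d r U \<and> x \<in> U \<and> U \<subseteq> W"
  using ample_groupoid unfolding ample_groupoid_def by blast

lemma continuous_map_d: "continuous_map T T d"
proof (rule pasting_lemma[where I = "{U. openin T U \<and> continuous_map (subtopology T U) T d}"
      and T = id and f = "\<lambda>_. d"])
  fix x assume "x \<in> G"
  then obtain U where "openin T U" "x \<in> U"
    and "homeomorphic_map (subtopology T U) (subtopology T (d ` U)) d"
    using d_local_homeomorphism by blast
  then have "continuous_map (subtopology T U) T d"
    using homeomorphic_imp_continuous_map continuous_map_in_subtopology by blast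
  then show "\<exists>U. U \<in> {U. openin T U \<and> continuous_map (subtopology T U) T d} \<and> x \<in> id U \<and> d x = d x"
    using \<open>openin T U\<close> \<open>x \<in> U\<close> by auto
qed auto

lemma continuous_map_r: "continuous_map T T r"
proof -
  have "continuous_map T T (d \<circ> iv)"
    using continuous_map_d continuous_map_iv continuous_map_compose by blast
  then show ?thesis
    by (rule continuous_map_eq) simp
qed

lemma openin_d_image:
  assumes B: "openin T B" shows "openin T (d ` B)"
proof (subst openin_subopen, intro ballI)
  fix y assume "y \<in> d ` B"
  then obtain x where x: "x \<in> B" "y = d x" by blast
  then obtain U where U: "openin T U" "x \<in> U" "openin T (d ` U)"
    and h: "homeomorphic_map (subtopology T U) (subtopology T (d ` U)) d"
    using d_local_homeomorphism openin_subset[OF B] by blast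
  have "open_map (subtopology T U) T d"
    using open_map_from_open_subtopology[OF U(3) homeomorphic_imp_open_map[OF h]] .
  then have "openin T (d ` (B \<inter> U))"
    using B unfolding open_map_def by (simp add: openin_subtopology_Int)
  then show "\<exists>V. openin T V \<and> y \<in> V \<and> V \<subseteq> d ` B"
    using x U(2) by blast
qed

lemma openin_iv_image:
  assumes "openin T B" shows "openin T (iv ` B)"
proof -
  have "homeomorphic_maps T T iv iv"
    unfolding homeomorphic_maps_def using continuous_map_iv by simp
  then show ?thesis
    using assms homeomorphic_maps_imp_map homeomorphic_imp_open_map open_map_def by blast
qed

lemma compact_open_slice_subset: "compact_open_slice T d r S \<Longrightarrow> S \<subseteq> G"
  unfolding compact_open_slice_def slice_def using openin_subset by auto

lemma compact_open_slice_iv_image: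
  assumes "compact_open_slice T d r S" shows "compact_open_slice T d r (iv ` S)"
proof -
  have S: "openin T S" "inj_on d S" "inj_on r S" "compactin T S" "S \<subseteq> G"
    using assms compact_open_slice_subset unfolding compact_open_slice_def slice_def by auto
  have "inj_on (d \<circ> iv) S = inj_on r S" "inj_on (r \<circ> iv) S = inj_on d S"
    using S(5) by (auto intro!: inj_on_cong)
  then have "inj_on (d \<circ> iv) S" "inj_on (r \<circ> iv) S"
    using S(2,3) by simp_all
  then have "inj_on d (iv ` S)" "inj_on r (iv ` S)"
    by (auto intro: inj_on_imageI)
  moreover have "openin T (iv ` S)" "compactin T (iv ` S)"
    using S openin_iv_image image_compactin continuous_map_iv by blast+
  ultimately show ?thesis
    unfolding compact_open_slice_def slice_def by blast
qed

lemma compact_open_slice_of_units: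
  assumes "openin T V" "compactin T V" "V \<subseteq> G0" shows "compact_open_slice T d r V"
proof -
  have "inj_on d V" "inj_on r V"
    using assms(3) unit_space_fixed by (metis inj_onI subsetD)+
  then show ?thesis
    using assms unfolding compact_open_slice_def slice_def by blast
qed

lemma compact_open_slice_d_image:
  assumes "compact_open_slice T d r S" shows "compact_open_slice T d r (d ` S)"
proof (rule compact_open_slice_of_units)
  show "openin T (d ` S)" "compactin T (d ` S)"
    using assms openin_d_image image_compactin continuous_map_d
    unfolding compact_open_slice_def slice_def by blast+
  show "d ` S \<subseteq> G0"
    using compact_open_slice_subset[OF assms] by auto
qed

lemma scaled_indicator_in_steinberg_algebra:
  "compact_open_slice T d r U \<Longrightarrow> (\<lambda>x. c * indicator U x) \<in> steinberg_algebra T d r"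
  unfolding steinberg_algebra_def
  by (intro CollectI exI[of _ "{U}"] exI[of _ "\<lambda>_. c"])
    (simp only: sum.insert finite.emptyI empty_iff not_False_eq_True sum.empty add_0_right
      finite.insertI singletonD simp_thms ball_simps)

lemma indicator_in_steinberg_algebra:
  "compact_open_slice T d r U \<Longrightarrow> indicator U \<in> steinberg_algebra T d r"
  using scaled_indicator_in_steinberg_algebra[of U 1] by simp

lemma minimal_orbit_meets_open:
  assumes "minimal T d r" "u \<in> G0" "openin T V" "V \<subseteq> G0" "V \<noteq> {}"
  obtains a where "a \<in> G" "d a = u" "r a \<in> V"
proof -
  obtain v where v: "v \<in> V" using assms(5) by blast
  have "v \<in> subtopology T G0 closure_of orbit G d r u"
    using assms(1,2,4) v unfolding minimal_def by blast
  moreover have "openin (subtopology T G0) V"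
    using openin_subtopology_Int[OF assms(3), of G0] assms(4) by (simp add: Int_absorb2)
  ultimately obtain y where "y \<in> orbit G d r u" "y \<in> V"
    using v unfolding in_closure_of by blast
  then show thesis
    using that unfolding orbit_def by blast
qed

lemma effective_open_subset_isotropy:
  "effective T d r \<Longrightarrow> openin T X \<Longrightarrow> X \<subseteq> isotropy G d r \<Longrightarrow> X \<subseteq> G0"
  unfolding effective_def using interior_of_maximal by blast

text \<open>
  If some x \<in> U over W has r x \<noteq> d x, separate d x from r x in the unit space and shrink W to
  a neighbourhood of d x containing d y and r y for no y \<in> U. Otherwise the arrows of U over W
  form an open subset of the isotropy, hence are units by effectiveness.
\<close>
lemma shrink_units_against_slice:
  assumes eff: "effective T d r" and haus: "Hausdorff_space (subtopology T G0)"
    and U: "openin T U" "inj_on d U" and W: "openin T W" "W \<subseteq> G0" "W \<noteq> {}"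
  obtains W' where "W' \<subseteq> W" "openin T W'" "W' \<noteq> {}"
    "\<And>x. \<lbrakk>x \<in> U; d x \<in> W'; r x \<in> W'\<rbrakk> \<Longrightarrow> x \<in> G0"
proof (cases "\<exists>x\<in>U. d x \<in> W \<and> r x \<noteq> d x")
  case True
  then obtain x where x: "x \<in> U" "d x \<in> W" "r x \<noteq> d x" by blast
  have "x \<in> G" using x(1) U(1) openin_subset by blast
  then have ends: "d x \<in> G" "d x \<in> G0" "r x \<in> G" "r x \<in> G0" "d x \<noteq> r x"
    using x(3) by auto
  obtain P Q where "openin T P" "openin T Q" "d x \<in> P" "r x \<in> Q" and PQ: "P \<inter> Q \<inter> G0 = {}"
    by (rule Hausdorff_subtopology_separation[OF haus ends])
  define W' where "W' = W \<inter> P \<inter> d ` (U \<inter> {y \<in> G. r y \<in> Q})"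
  have "openin T (U \<inter> {y \<in> G. r y \<in> Q})"
    using U(1) \<open>openin T Q\<close> continuous_map_r openin_continuous_map_preimage by blast
  then have "openin T W'"
    unfolding W'_def using W(1) \<open>openin T P\<close> openin_d_image by blast
  moreover have "d x \<in> W'"
    unfolding W'_def using x \<open>x \<in> G\<close> \<open>d x \<in> P\<close> \<open>r x \<in> Q\<close> by blast
  moreover have "y \<in> G0" if y: "y \<in> U" "d y \<in> W'" "r y \<in> W'" for y
  proof -
    obtain z where "z \<in> U" "r z \<in> Q" "d y = d z"
      using y(2) unfolding W'_def by blast
    then have "r y \<in> Q"
      using U(2) y(1) by (metis inj_onD)
    moreover have "y \<in> G"
      using y(1) U(1) openin_subset by blast
    then have "r y \<in> G0"
      by simp
    ultimately show "y \<in> G0"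
      using y(3) PQ unfolding W'_def by blast
  qed
  ultimately show thesis
    using that[of W'] unfolding W'_def by blast
next
  case False
  define X where "X = U \<inter> {y \<in> G. d y \<in> W}"
  have "openin T X"
    unfolding X_def using U(1) W(1) continuous_map_d openin_continuous_map_preimage by blast
  moreover have "X \<subseteq> isotropy G d r"
    unfolding X_def isotropy_def using False by auto
  ultimately have "X \<subseteq> G0"
    by (rule effective_open_subset_isotropy[OF eff])
  then show thesis
    using that[of W] W openin_subset[OF U(1)] unfolding X_def by blast
qed

lemma shrink_units_deciding_slice:
  assumes eff: "effective T d r" and haus: "Hausdorff_space (subtopology T G0)"
    and U: "compact_open_slice T d r U" and W: "openin T W" "W \<subseteq> G0" "W \<noteq> {}"
  obtains W' where "W' \<subseteq> W" "openin T W'" "W' \<noteq> {}" "W' \<subseteq> U \<or> W' \<inter> U = {}"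
    "\<And>x. \<lbrakk>x \<in> U; d x \<in> W'; r x \<in> W'\<rbrakk> \<Longrightarrow> x \<in> G0"
proof -
  have U': "openin T U" "inj_on d U"
    using U unfolding compact_open_slice_def slice_def by auto
  obtain W1 where W1: "W1 \<subseteq> W" "openin T W1" "W1 \<noteq> {}"
    "\<And>x. \<lbrakk>x \<in> U; d x \<in> W1; r x \<in> W1\<rbrakk> \<Longrightarrow> x \<in> G0"
    using shrink_units_against_slice[OF eff haus U' W] by blast
  show thesis
  proof (cases "W1 \<inter> U = {}")
    case True
    then show thesis
      using that[of W1] W1 by blast
  next
    case False
    show thesis
    proof (rule that[of "W1 \<inter> U"])
      show "openin T (W1 \<inter> U)"
        using W1(2) U'(1) by (rule openin_Int)
      show "x \<in> G0" if "x \<in> U" "d x \<in> W1 \<inter> U" "r x \<in> W1 \<inter> U" for x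
        using W1(4) that by blast
    qed (use W1(1) False in auto)
  qed
qed

lemma shrink_units_against_slices:
  assumes eff: "effective T d r" and haus: "Hausdorff_space (subtopology T G0)"
    and F: "finite F" "\<And>U. U \<in> F \<Longrightarrow> compact_open_slice T d r U"
    and W: "openin T W" "W \<subseteq> G0" "W \<noteq> {}"
  obtains W' where "W' \<subseteq> W" "openin T W'" "W' \<noteq> {}"
    "\<And>U. U \<in> F \<Longrightarrow> W' \<subseteq> U \<or> W' \<inter> U = {}"
    "\<And>U x. \<lbrakk>U \<in> F; x \<in> U; d x \<in> W'; r x \<in> W'\<rbrakk> \<Longrightarrow> x \<in> G0"
proof -
  define Q where "Q W \<longleftrightarrow> openin T W \<and> W \<subseteq> G0 \<and> W \<noteq> {}" for W
  define P where "P U W \<longleftrightarrow> (W \<subseteq> U \<or> W \<inter> U = {}) \<and> (\<forall>x\<in>U. d x \<in> W \<and> r x \<in> W \<longrightarrow> x \<in> G0)"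
    for U W
  have step: "\<exists>W''\<subseteq>W'. Q W'' \<and> P U W''" if U: "U \<in> F" and QW: "Q W'" for U W'
  proof -
    have W': "openin T W'" "W' \<subseteq> G0" "W' \<noteq> {}"
      using QW unfolding Q_def by auto
    obtain W'' where "W'' \<subseteq> W'" "openin T W''" "W'' \<noteq> {}" "W'' \<subseteq> U \<or> W'' \<inter> U = {}"
      "\<And>x. \<lbrakk>x \<in> U; d x \<in> W''; r x \<in> W''\<rbrakk> \<Longrightarrow> x \<in> G0"
      using shrink_units_deciding_slice[OF eff haus F(2)[OF U] W'] by blast
    then show ?thesis
      using \<open>W' \<subseteq> G0\<close> unfolding Q_def P_def by blast
  qed
  have mono: "P U W'" if "P U W" "W' \<subseteq> W" for U W W'
    using that unfolding P_def by blast
  have "Q W"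
    using W unfolding Q_def by blast
  with F(1) have "\<exists>W'\<subseteq>W. Q W' \<and> (\<forall>U\<in>F. P U W')"
    using step mono by (rule finite_shrinking)
  then obtain W' where "W' \<subseteq> W" "Q W'" "\<forall>U\<in>F. P U W'"
    by blast
  then show thesis
    unfolding P_def Q_def by (intro that[of W']) blast+
qed

lemma steinberg_algebra_element_scalar_on_corner:
  fixes h :: "'g \<Rightarrow> 'k::field"
  assumes eff: "effective T d r" and haus: "Hausdorff_space (subtopology T G0)"
    and h: "h \<in> steinberg_algebra T d r" and W: "openin T W" "W \<subseteq> G0" "W \<noteq> {}"
  obtains V u where "compact_open_slice T d r V" "V \<subseteq> W" "u \<in> V"
    "\<And>x. \<lbrakk>x \<in> G; d x \<in> V; r x \<in> V\<rbrakk> \<Longrightarrow> h x = h u * indicator V x"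
proof -
  obtain F c where F: "finite F" "\<And>U. U \<in> F \<Longrightarrow> compact_open_slice T d r U"
    and h_eq: "h = (\<lambda>x. \<Sum>U\<in>F. c U * indicator U x)"
    using h unfolding steinberg_algebra_def by blast
  obtain W' where W': "W' \<subseteq> W" "openin T W'" "W' \<noteq> {}"
    and decided: "\<And>U. U \<in> F \<Longrightarrow> W' \<subseteq> U \<or> W' \<inter> U = {}"
    and units: "\<And>U x. \<lbrakk>U \<in> F; x \<in> U; d x \<in> W'; r x \<in> W'\<rbrakk> \<Longrightarrow> x \<in> G0"
    using shrink_units_against_slices[OF eff haus F W] by blast
  obtain u where "u \<in> W'" using W'(3) by blast
  then obtain V where V: "compact_open_slice T d r V" "u \<in> V" "V \<subseteq> W'"
    using compact_open_slice_basis W'(2) by blast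
  have "h x = h u * indicator V x" if x: "x \<in> G" "d x \<in> V" "r x \<in> V" for x
  proof (cases "x \<in> V")
    case True
    then have "indicator U x = (indicator U u :: 'k)" if "U \<in> F" for U
      using decided[OF that] V(2,3) by (auto simp: indicator_def)
    then show ?thesis
      using True unfolding h_eq by simp
  next
    case False
    have "x \<notin> U" if "U \<in> F" for U
    proof
      assume "x \<in> U"
      then have "x \<in> G0" using units[OF that] x V(3) by blast
      then show False using False x(2) unit_space_fixed by metis
    qed
    then show ?thesis
      using False unfolding h_eq by simp
  qed
  then show thesis
    using that V W'(1) by blast
qed

end

locale twisted_ample = ample T d r mul iv
  for T :: "'g topology" and d r :: "'g \<Rightarrow> 'g" and mul :: "'g \<Rightarrow> 'g \<Rightarrow> 'g" and iv :: "'g \<Rightarrow> 'g" +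
  fixes \<nu> :: "'g \<Rightarrow> 'g \<Rightarrow> 'k::field"
  assumes cocycle: "normalized_continuous_2cocycle T d r mul iv \<nu>"
begin

abbreviation \<A> :: "('g \<Rightarrow> 'k) set" where "\<A> \<equiv> steinberg_algebra T d r"

abbreviation conv :: "('g \<Rightarrow> 'k) \<Rightarrow> ('g \<Rightarrow> 'k) \<Rightarrow> 'g \<Rightarrow> 'k" (infixl "\<star>" 70)
  where "f \<star> g \<equiv> twisted_conv G d r mul \<nu> f g"

lemma nu_nonzero: "\<lbrakk>a \<in> G; b \<in> G; d a = r b\<rbrakk> \<Longrightarrow> \<nu> a b \<noteq> 0"
  using cocycle unfolding normalized_continuous_2cocycle_def Let_def composable_def by blast

lemma nu_r_left [simp]: "a \<in> G \<Longrightarrow> \<nu> (r a) a = 1"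
  and nu_d_right [simp]: "a \<in> G \<Longrightarrow> \<nu> a (d a) = 1"
  using cocycle unfolding normalized_continuous_2cocycle_def Let_def by (metis d_iv)+

lemma twist_iv_locally_constant:
  assumes a: "a \<in> G"
  obtains N where "openin T N" "a \<in> N" "\<And>b. b \<in> N \<Longrightarrow> \<nu> (iv b) b = \<nu> (iv a) a"
proof -
  let ?G2 = "composable G d r"
  have "\<forall>p\<in>?G2. \<exists>W. openin (subtopology (prod_topology T T) ?G2) W \<and> p \<in> W \<and>
      (\<forall>q\<in>W. \<nu> (fst q) (snd q) = \<nu> (fst p) (snd p))"
    using cocycle unfolding normalized_continuous_2cocycle_def Let_def by blast
  moreover have "(iv a, a) \<in> ?G2"
    using a unfolding composable_def by simp
  ultimately obtain W where W: "openin (subtopology (prod_topology T T) ?G2) W" "(iv a, a) \<in> W"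
      "\<forall>q\<in>W. \<nu> (fst q) (snd q) = \<nu> (iv a) a"
    by fastforce
  have "continuous_map T (subtopology (prod_topology T T) ?G2) (\<lambda>b. (iv b, b))"
    unfolding continuous_map_in_subtopology
    using continuous_map_iv by (auto simp: composable_def continuous_map_paired)
  then have "openin T {b \<in> G. (iv b, b) \<in> W}"
    using W(1) by (rule openin_continuous_map_preimage)
  then show thesis
  proof (rule that)
    show "a \<in> {b \<in> G. (iv b, b) \<in> W}"
      using a W(2) by simp
    show "\<nu> (iv b) b = \<nu> (iv a) a" if "b \<in> {b \<in> G. (iv b, b) \<in> W}" for b
      using that W(3) by auto
  qed
qed

lemma scaled_unit_indicator_conv:
  assumes "P \<subseteq> G0"
  shows "(\<lambda>x. c * indicator P x) \<star> g = (\<lambda>x. if x \<in> G \<and> r x \<in> P then c * g x else 0)"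
proof
  fix x
  have P: "\<And>a. a \<in> P \<Longrightarrow> a \<in> G \<and> d a = a \<and> r a = a"
    using assms unit_space_fixed by blast
  have "{(a, b). a \<in> G \<and> b \<in> G \<and> d a = r b \<and> mul a b = x \<and> c * indicator P a \<noteq> 0 \<and> g b \<noteq> 0}
      = (if x \<in> G \<and> r x \<in> P \<and> c \<noteq> 0 \<and> g x \<noteq> 0 then {(r x, x)} else {})"
    using P by (auto simp: indicator_def split: if_splits)
  then show "((\<lambda>x. c * indicator P x) \<star> g) x = (if x \<in> G \<and> r x \<in> P then c * g x else 0)"
    unfolding twisted_conv_def by (auto simp: indicator_def)
qed

lemma conv_scaled_unit_indicator:
  assumes "P \<subseteq> G0"
  shows "g \<star> (\<lambda>x. c * indicator P x) = (\<lambda>x. if x \<in> G \<and> d x \<in> P then c * g x else 0)"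
proof
  fix x
  have P: "\<And>a. a \<in> P \<Longrightarrow> a \<in> G \<and> d a = a \<and> r a = a"
    using assms unit_space_fixed by blast
  have "{(a, b). a \<in> G \<and> b \<in> G \<and> d a = r b \<and> mul a b = x \<and> g a \<noteq> 0 \<and> c * indicator P b \<noteq> 0}
      = (if x \<in> G \<and> d x \<in> P \<and> c \<noteq> 0 \<and> g x \<noteq> 0 then {(x, d x)} else {})"
    using P by (auto simp: indicator_def split: if_splits)
  then show "(g \<star> (\<lambda>x. c * indicator P x)) x = (if x \<in> G \<and> d x \<in> P then c * g x else 0)"
    unfolding twisted_conv_def by (auto simp: indicator_def)
qed

lemma unit_indicator_conv:
  "P \<subseteq> G0 \<Longrightarrow> indicator P \<star> g = (\<lambda>x. if x \<in> G \<and> r x \<in> P then g x else 0)"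
  using scaled_unit_indicator_conv[of P 1 g] by (simp add: fun_eq_iff)

lemma conv_unit_indicator:
  "P \<subseteq> G0 \<Longrightarrow> g \<star> indicator P = (\<lambda>x. if x \<in> G \<and> d x \<in> P then g x else 0)"
  using conv_scaled_unit_indicator[of P g 1] by (simp add: fun_eq_iff)

lemma unit_indicator_conv_unit_indicator:
  assumes "P \<subseteq> G0" "Q \<subseteq> G0" shows "indicator P \<star> indicator Q = indicator (P \<inter> Q)"
proof -
  have "\<And>x. x \<in> Q \<Longrightarrow> x \<in> G \<and> r x = x"
    using assms(2) unit_space_fixed by blast
  then show ?thesis
    unfolding unit_indicator_conv[OF assms(1)] by (auto simp: indicator_def fun_eq_iff)
qed

lemma inverse_slice_conv_at_domain:
  assumes S: "inj_on d S" "S \<subseteq> G" and s: "s \<in> S"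
  shows "(indicator (iv ` S) \<star> g) (d s) = \<nu> (iv s) s * g s"
proof -
  have "s \<in> G" using s S(2) by blast
  have "{(a, b). a \<in> G \<and> b \<in> G \<and> d a = r b \<and> mul a b = d s \<and> indicator (iv ` S) a \<noteq> (0::'k) \<and> g b \<noteq> 0}
      = (if g s \<noteq> 0 then {(iv s, s)} else {})" (is "?L = ?R")
  proof (intro equalityI subsetI)
    fix p assume "p \<in> ?L"
    then obtain a b t where p: "p = (a, b)" "a \<in> G" "b \<in> G" "d a = r b" "mul a b = d s" "g b \<noteq> 0"
        and t: "t \<in> S" "a = iv t"
      by (auto simp: indicator_def split: if_splits)
    have "t \<in> G" using t(1) S(2) by blast
    have "d t = r (mul a b)"
      using p(2-4) t(2) \<open>t \<in> G\<close> by simp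
    then have "t = s"
      using p(5) \<open>s \<in> G\<close> S(1) t(1) s by (simp add: inj_on_eq_iff)
    have "b = mul (iv a) (mul a b)"
      using p(2-4) by (simp add: mul_iv_cancel_left)
    then have "b = s"
      using p(5) t(2) \<open>t = s\<close> \<open>s \<in> G\<close> by simp
    then show "p \<in> ?R"
      using p t \<open>t = s\<close> by simp
  next
    fix p assume "p \<in> ?R"
    then show "p \<in> ?L"
      using s \<open>s \<in> G\<close> by (auto simp: indicator_def split: if_splits)
  qed
  then show ?thesis
    unfolding twisted_conv_def using s by (auto simp: indicator_def)
qed

lemma inverse_slice_conv_slice_off_domain:
  assumes S: "inj_on r S" "S \<subseteq> G" and x: "x \<notin> d ` S"
  shows "(indicator (iv ` S) \<star> indicator S) x = 0"
proof -
  have no_factorisation: "{(a, b). a \<in> G \<and> b \<in> G \<and> d a = r b \<and> mul a b = x \<and>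
      indicator (iv ` S) a \<noteq> (0::'k) \<and> indicator S b \<noteq> (0::'k)} = {}"
  proof (rule ccontr)
    assume "\<not> ?thesis"
    then obtain a b t where p: "a \<in> G" "b \<in> G" "d a = r b" "mul a b = x" "b \<in> S"
        and t: "t \<in> S" "a = iv t"
      by (auto simp: indicator_def split: if_splits)
    have "t \<in> G" using t(1) S(2) by blast
    then have "t = b"
      using p(3,5) t S(1) by (simp add: inj_on_eq_iff)
    then show False
      using p t \<open>t \<in> G\<close> x by auto
  qed
  show ?thesis
    unfolding twisted_conv_def no_factorisation by simp
qed

lemma inverse_slice_conv_slice:
  assumes S: "compact_open_slice T d r S" and twist: "\<And>s. s \<in> S \<Longrightarrow> \<nu> (iv s) s = \<mu>"
  shows "indicator (iv ` S) \<star> indicator S = (\<lambda>x. \<mu> * indicator (d ` S) x)"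
proof
  fix x
  have inj: "inj_on d S" "inj_on r S" and "S \<subseteq> G"
    using S compact_open_slice_subset unfolding compact_open_slice_def slice_def by auto
  show "(indicator (iv ` S) \<star> indicator S) x = \<mu> * indicator (d ` S) x"
  proof (cases "x \<in> d ` S")
    case True
    then obtain s where "s \<in> S" "x = d s" by blast
    then show ?thesis
      using inverse_slice_conv_at_domain[OF inj(1) \<open>S \<subseteq> G\<close>] twist True by simp
  next
    case False
    then show ?thesis
      using inverse_slice_conv_slice_off_domain[OF inj(2) \<open>S \<subseteq> G\<close>] by simp
  qed
qed


text \<open>
  The twist \<nu> (iv s) s need not be 1, but \<nu> is locally constant, so it is constant on a small
  enough slice.
\<close>
lemma exists_slice_from_unit_into:
  assumes "minimal T d r" "openin T V" "V \<subseteq> G0" "V \<noteq> {}" "openin T K" "K \<subseteq> G0" "u \<in> K"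
  obtains S \<mu> where "compact_open_slice T d r S" "u \<in> d ` S" "d ` S \<subseteq> K" "r ` S \<subseteq> V"
    "\<mu> \<noteq> 0" "\<And>s. s \<in> S \<Longrightarrow> \<nu> (iv s) s = \<mu>"
proof -
  obtain a where a: "a \<in> G" "d a = u" "r a \<in> V"
    using minimal_orbit_meets_open[OF assms(1) _ assms(2-4)] assms(6,7) by blast
  obtain N where N: "openin T N" "a \<in> N" "\<And>b. b \<in> N \<Longrightarrow> \<nu> (iv b) b = \<nu> (iv a) a"
    using twist_iv_locally_constant[OF a(1)] by blast
  define N' where "N' = N \<inter> {b \<in> G. d b \<in> K} \<inter> {b \<in> G. r b \<in> V}"
  have "openin T N'"
    unfolding N'_def using N(1) assms(2,5) continuous_map_d continuous_map_r
    by (intro openin_Int openin_continuous_map_preimage) auto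
  moreover have "a \<in> N'"
    unfolding N'_def using a N(2) assms(7) by simp
  ultimately obtain S where S: "compact_open_slice T d r S" "a \<in> S" "S \<subseteq> N'"
    using compact_open_slice_basis by blast
  have "\<nu> (iv a) a \<noteq> 0"
    using a(1) by (intro nu_nonzero) simp_all
  show thesis
  proof (rule that[OF S(1) _ _ _ \<open>\<nu> (iv a) a \<noteq> 0\<close>])
    show "u \<in> d ` S"
      using S(2) a(2) by blast
    show "d ` S \<subseteq> K" "r ` S \<subseteq> V"
      using S(3) unfolding N'_def by blast+
    show "\<nu> (iv s) s = \<nu> (iv a) a" if "s \<in> S" for s
      using that S(3) N(3) unfolding N'_def by blast
  qed
qed

context
  fixes I assumes ideal: "two_sided_ideal \<A> (\<star>) I"
begin

lemma unit_indicator_in_ideal_of_scaled: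
  assumes V: "compact_open_slice T d r V" "V \<subseteq> G0" and c: "c \<noteq> 0"
    and cV: "(\<lambda>x. c * indicator V x) \<in> I"
  shows "indicator V \<in> I"
proof -
  have units: "\<And>x. x \<in> V \<Longrightarrow> x \<in> G \<and> r x = x"
    using V(2) unit_space_fixed by blast
  have "(\<lambda>x. inverse c * indicator V x) \<star> (\<lambda>x. c * indicator V x) = indicator V"
    unfolding scaled_unit_indicator_conv[OF V(2)]
    using units c by (auto simp: fun_eq_iff indicator_def)
  then show ?thesis
    using two_sided_ideal_mult_left[OF ideal
        scaled_indicator_in_steinberg_algebra[OF V(1), of "inverse c"] cV]
    by simp
qed

lemma corner_in_ideal:
  assumes V: "compact_open_slice T d r V" "V \<subseteq> G0" and h: "h \<in> I"
  shows "(\<lambda>x. if x \<in> G \<and> d x \<in> V \<and> r x \<in> V then h x else 0) \<in> I"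
proof -
  have "indicator V \<star> h \<in> I"
    using two_sided_ideal_mult_left[OF ideal indicator_in_steinberg_algebra[OF V(1)] h] .
  then have "(indicator V \<star> h) \<star> indicator V \<in> I"
    using two_sided_ideal_mult_right[OF ideal _ indicator_in_steinberg_algebra[OF V(1)]] by blast
  moreover have "(indicator V \<star> h) \<star> indicator V
      = (\<lambda>x. if x \<in> G \<and> d x \<in> V \<and> r x \<in> V then h x else 0)"
    unfolding unit_indicator_conv[OF V(2)] conv_unit_indicator[OF V(2)] by (auto simp: fun_eq_iff)
  ultimately show ?thesis
    by simp
qed

lemma ideal_element_nonvanishing_on_units:
  assumes f: "f \<in> I" and supp: "T interior_of {x. f x \<noteq> 0} \<noteq> {}"
  obtains h W where "h \<in> I" "openin T W" "W \<subseteq> G0" "W \<noteq> {}" "\<And>u. u \<in> W \<Longrightarrow> h u \<noteq> 0"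
proof -
  obtain \<gamma> where "\<gamma> \<in> T interior_of {x. f x \<noteq> 0}"
    using supp by blast
  then obtain B where B: "compact_open_slice T d r B" "\<gamma> \<in> B" "B \<subseteq> T interior_of {x. f x \<noteq> 0}"
    using compact_open_slice_basis openin_interior_of by blast
  have Bp: "openin T B" "inj_on d B" "B \<subseteq> G"
    using B(1) compact_open_slice_subset unfolding compact_open_slice_def slice_def by auto
  define h where "h = indicator (iv ` B) \<star> f"
  have "h \<in> I"
    unfolding h_def using two_sided_ideal_mult_left[OF ideal
        indicator_in_steinberg_algebra[OF compact_open_slice_iv_image[OF B(1)]] f] .
  moreover have "h u \<noteq> 0" if "u \<in> d ` B" for u
  proof -
    obtain s where s: "s \<in> B" "u = d s" using \<open>u \<in> d ` B\<close> by blast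
    have "s \<in> G"
      using s(1) Bp(3) by blast
    moreover have "f s \<noteq> 0"
      using s(1) B(3) interior_of_subset[of T "{x. f x \<noteq> 0}"] by blast
    moreover have "h u = \<nu> (iv s) s * f s"
      unfolding h_def s(2) using inverse_slice_conv_at_domain[OF Bp(2,3) s(1)] .
    ultimately show ?thesis
      using nu_nonzero[of "iv s" s] by simp
  qed
  moreover have "openin T (d ` B)" "d ` B \<subseteq> G0" "d ` B \<noteq> {}"
    using openin_d_image[OF Bp(1)] Bp(3) B(2) by auto
  ultimately show thesis
    using that[of h "d ` B"] by blast
qed

lemma nonzero_ideal_contains_unit_indicator:
  assumes eff: "effective T d r" and haus: "Hausdorff_space (subtopology T G0)"
    and f: "f \<in> I" and supp: "T interior_of {x. f x \<noteq> 0} \<noteq> {}"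
  obtains V where "compact_open_slice T d r V" "V \<subseteq> G0" "V \<noteq> {}" "indicator V \<in> I"
proof -
  obtain h W where h: "h \<in> I" and W: "openin T W" "W \<subseteq> G0" "W \<noteq> {}"
    and h_nonzero: "\<And>u. u \<in> W \<Longrightarrow> h u \<noteq> 0"
    using ideal_element_nonvanishing_on_units[OF f supp] by blast
  have "h \<in> \<A>"
    using h two_sided_ideal_subset[OF ideal] by blast
  then obtain V u where V: "compact_open_slice T d r V" "V \<subseteq> W" "u \<in> V"
    and h_on_V: "\<And>x. \<lbrakk>x \<in> G; d x \<in> V; r x \<in> V\<rbrakk> \<Longrightarrow> h x = h u * indicator V x"
    using steinberg_algebra_element_scalar_on_corner[OF eff haus _ W] by blast
  have "V \<subseteq> G0"
    using V(2) W(2) by blast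
  have "(\<lambda>x. if x \<in> G \<and> d x \<in> V \<and> r x \<in> V then h x else 0) = (\<lambda>x. h u * indicator V x)"
  proof
    fix x
    have "x \<in> G \<and> d x \<in> V \<and> r x \<in> V" if "x \<in> V"
      using that \<open>V \<subseteq> G0\<close> unit_space_fixed by (metis subsetD)
    then show "(if x \<in> G \<and> d x \<in> V \<and> r x \<in> V then h x else 0) = h u * indicator V x"
      using h_on_V by (auto simp: indicator_def)
  qed
  then have "(\<lambda>x. h u * indicator V x) \<in> I"
    using corner_in_ideal[OF V(1) \<open>V \<subseteq> G0\<close> h] by simp
  then have "indicator V \<in> I"
    using unit_indicator_in_ideal_of_scaled[OF V(1) \<open>V \<subseteq> G0\<close>] h_nonzero V(2,3) by blast
  then show thesis
    using that V(1,3) \<open>V \<subseteq> G0\<close> by blast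
qed

lemma domain_indicator_in_ideal:
  assumes V: "indicator V \<in> I" "V \<subseteq> G0" and S: "compact_open_slice T d r S" "r ` S \<subseteq> V"
    and twist: "\<mu> \<noteq> 0" "\<And>s. s \<in> S \<Longrightarrow> \<nu> (iv s) s = \<mu>"
  shows "indicator (d ` S) \<in> I"
proof -
  have "S \<subseteq> G"
    using compact_open_slice_subset[OF S(1)] .
  then have "indicator V \<star> indicator S = indicator S"
    unfolding unit_indicator_conv[OF V(2)] using S(2) by (auto simp: fun_eq_iff indicator_def)
  then have "indicator S \<in> I"
    using two_sided_ideal_mult_right[OF ideal V(1) indicator_in_steinberg_algebra[OF S(1)]] by simp
  then have "indicator (iv ` S) \<star> indicator S \<in> I"
    using two_sided_ideal_mult_left[OF ideal
        indicator_in_steinberg_algebra[OF compact_open_slice_iv_image[OF S(1)]]] by blast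
  then have "(\<lambda>x. \<mu> * indicator (d ` S) x) \<in> I"
    using inverse_slice_conv_slice[OF S(1) twist(2)] by (simp only:)
  moreover have "d ` S \<subseteq> G0"
    using \<open>S \<subseteq> G\<close> by auto
  ultimately show ?thesis
    using unit_indicator_in_ideal_of_scaled[OF compact_open_slice_d_image[OF S(1)] _ twist(1)] by blast
qed

lemma union_indicator_in_ideal:
  assumes "finite \<F>" "\<forall>P\<in>\<F>. P \<subseteq> G0 \<and> indicator P \<in> I"
  shows "indicator (\<Union>\<F>) \<in> I"
  using assms
proof (induction \<F> rule: finite_induct)
  case empty
  have "indicator (\<Union>{}) = (\<lambda>_. 0 :: 'k)"
    by (simp add: fun_eq_iff)
  then show ?case
    using two_sided_ideal_zero[OF ideal] by simp
next
  case (insert P \<F>)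
  then have IH: "indicator (\<Union>\<F>) \<in> I" and P: "P \<subseteq> G0" "indicator P \<in> I"
    and "\<Union>\<F> \<subseteq> G0"
    by auto
  have "indicator P \<star> indicator (\<Union>\<F>) \<in> I"
    using two_sided_ideal_mult_left[OF ideal _ IH] P(2) two_sided_ideal_subset[OF ideal] by blast
  then have "indicator (P \<inter> \<Union>\<F>) \<in> I"
    using unit_indicator_conv_unit_indicator[OF P(1) \<open>\<Union>\<F> \<subseteq> G0\<close>] by simp
  then have "(\<lambda>x. indicator P x + (indicator (\<Union>\<F>) x + - indicator (P \<inter> \<Union>\<F>) x)) \<in> I"
    using two_sided_ideal_add[OF ideal P(2) two_sided_ideal_add[OF ideal IH
        two_sided_ideal_uminus[OF ideal]]] by blast
  moreover have "(\<lambda>x. indicator P x + (indicator (\<Union>\<F>) x + - indicator (P \<inter> \<Union>\<F>) x))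
      = (indicator (\<Union>(insert P \<F>)) :: 'g \<Rightarrow> 'k)"
    by (auto simp: fun_eq_iff indicator_def)
  ultimately show ?case
    by simp
qed

lemma compact_open_units_indicator_in_ideal:
  assumes mini: "minimal T d r" and V: "openin T V" "V \<subseteq> G0" "V \<noteq> {}" "indicator V \<in> I"
    and K: "openin T K" "compactin T K" "K \<subseteq> G0"
  shows "indicator K \<in> I"
proof -
  define \<U> where "\<U> = {P. openin T P \<and> P \<subseteq> K \<and> indicator P \<in> I}"
  have "K \<subseteq> \<Union>\<U>"
  proof
    fix u assume "u \<in> K"
    then obtain S \<mu> where S: "compact_open_slice T d r S" "u \<in> d ` S" "d ` S \<subseteq> K" "r ` S \<subseteq> V"
      "\<mu> \<noteq> 0" "\<And>s. s \<in> S \<Longrightarrow> \<nu> (iv s) s = \<mu>"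
      using exists_slice_from_unit_into[OF mini V(1-3) K(1,3)] by blast
    have "indicator (d ` S) \<in> I"
      using domain_indicator_in_ideal[OF V(4,2) S(1,4-6)] .
    moreover have "openin T (d ` S)"
      using openin_d_image S(1) unfolding compact_open_slice_def slice_def by blast
    ultimately show "u \<in> \<Union>\<U>"
      using S(2,3) unfolding \<U>_def by blast
  qed
  moreover have "\<forall>P\<in>\<U>. openin T P"
    unfolding \<U>_def by blast
  ultimately obtain \<F> where \<F>: "finite \<F>" "\<F> \<subseteq> \<U>" "K \<subseteq> \<Union>\<F>"
    using K(2) unfolding compactin_def by blast
  have "\<Union>\<F> = K"
    using \<F>(2,3) unfolding \<U>_def by blast
  moreover have "\<forall>P\<in>\<F>. P \<subseteq> G0 \<and> indicator P \<in> I"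
    using \<F>(2) K(3) unfolding \<U>_def by blast
  ultimately show ?thesis
    using union_indicator_in_ideal[OF \<F>(1)] by simp
qed

lemma steinberg_algebra_subset_ideal:
  assumes mini: "minimal T d r" and V: "openin T V" "V \<subseteq> G0" "V \<noteq> {}" "indicator V \<in> I"
  shows "\<A> \<subseteq> I"
proof
  fix f assume "f \<in> \<A>"
  then obtain F c where F: "finite F" "\<And>U. U \<in> F \<Longrightarrow> compact_open_slice T d r U"
    and f: "f = (\<lambda>x. \<Sum>U\<in>F. c U * indicator U x)"
    unfolding steinberg_algebra_def by blast
  have "(\<lambda>x. c U * indicator U x) \<in> I" if "U \<in> F" for U
  proof -
    have U: "compact_open_slice T d r U"
      using F(2) that .
    then have "compact_open_slice T d r (d ` U)" "d ` U \<subseteq> G0"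
      using compact_open_slice_d_image[OF U] compact_open_slice_subset[OF U] by auto
    then have "indicator (d ` U) \<in> I"
      using compact_open_units_indicator_in_ideal[OF mini V]
      unfolding compact_open_slice_def slice_def by blast
    then have "(\<lambda>x. c U * indicator U x) \<star> indicator (d ` U) \<in> I"
      by (rule two_sided_ideal_mult_left[OF ideal scaled_indicator_in_steinberg_algebra[OF U]])
    moreover have "(\<lambda>x. c U * indicator U x) \<star> indicator (d ` U) = (\<lambda>x. c U * indicator U x)"
      unfolding conv_unit_indicator[OF \<open>d ` U \<subseteq> G0\<close>]
      using compact_open_slice_subset[OF U] by (auto simp: fun_eq_iff indicator_def)
    ultimately show ?thesis
      by simp
  qed
  then show "f \<in> I"
    unfolding f by (rule two_sided_ideal_sum[OF ideal F(1)])
qed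

end

end

theorem proposition4p7:
  fixes T :: "'g topology"
    and d r :: "'g \<Rightarrow> 'g"
    and mul :: "'g \<Rightarrow> 'g \<Rightarrow> 'g"
    and iv :: "'g \<Rightarrow> 'g"
    and \<nu> :: "'g \<Rightarrow> 'g \<Rightarrow> 'k::field"
  assumes "ample_groupoid T d r mul iv"
    and "second_countable T"
    and "Hausdorff_space (subtopology T (unit_space (topspace T) d))"
    and "normalized_continuous_2cocycle T d r mul iv \<nu>"
    and "effective T d r"
    and "\<forall>f \<in> (steinberg_algebra T d r :: ('g \<Rightarrow> 'k) set). f \<noteq> (\<lambda>_. 0) \<longrightarrow>
           T interior_of {x. f x \<noteq> 0} \<noteq> {}"
    and "minimal T d r"
  shows "simple_algebra (steinberg_algebra T d r) (twisted_conv (topspace T) d r mul \<nu>)"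
proof -
  interpret twisted_ample T d r mul iv \<nu>
    using assms(1,4) by unfold_locales
  show ?thesis
    unfolding simple_algebra_def
  proof (intro allI impI)
    fix I assume ideal: "two_sided_ideal \<A> (\<star>) I"
    show "I = {\<lambda>_. 0} \<or> I = \<A>"
    proof (cases "I \<subseteq> {\<lambda>_. 0}")
      case True
      then show ?thesis
        using two_sided_ideal_zero[OF ideal] by blast
    next
      case False
      then obtain f where f: "f \<in> I" "f \<noteq> (\<lambda>_. 0)"
        by blast
      then have "T interior_of {x. f x \<noteq> 0} \<noteq> {}"
        using assms(6) two_sided_ideal_subset[OF ideal] by blast
      then obtain V where "compact_open_slice T d r V" "V \<subseteq> G0" "V \<noteq> {}" "indicator V \<in> I"
        using nonzero_ideal_contains_unit_indicator[OF ideal assms(5,3) f(1)] by blast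
      then have "\<A> \<subseteq> I"
        using steinberg_algebra_subset_ideal[OF ideal assms(7)]
        unfolding compact_open_slice_def slice_def by blast
      then show ?thesis
        using two_sided_ideal_subset[OF ideal] by blast
    qed
  qed
qed

end
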